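(* Let $L>0$, $\mathbb{T}=[0,L]$ with periodic boundary conditions, $N\ge1$, $D_i>0$, $h_{ij}\in\mathbb{R}$, and $K:\mathbb{T}\to\mathbb{R}$, $K\ge0$, a zero-mean probability density that is twice differentiable with $K'\in L^\infty(\mathbb{T})$. Let $u_0\in C^2(\mathbb{T})^N$ with $u_0(x)>0$ for all $x\in\mathbb{T}$, and let $u=(u_1,\dots,u_N)\in C^1((0,T_* ),L^2(\mathbb{T}))^N\cap C^0((0,T_* ),C^2(\mathbb{T}))^N$ be the solution of \[ \partial_tu_i=D_i\partial_x^2u_i-\partial_x\Big[u_i\,\partial_x\sum_{j=1}^Nh_{ij}(K\ast u_j)\Big],\quad i=1,\dots,N,\qquad u(\cdot,0)=u_0, \] where $T_*=\infty$ if $\|u(t)\|_{L^1}$ is bounded for all time and otherwise $T_*$ is the earliest time at which $\|u(t)\|_{L^1}=2\|u_0\|_{L^1}$. Then $u(x,t)>0$ (componentwise) for all $x\in\mathbb{T}$ and $t<T_*$.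
   Context: $(K\ast f)(x)=\int_0^LK(x-y)f(y)\,dy$ with periodic extension; for vector-valued $g$, $\|g\|_{L^1}=\sum_i\|g_i\|_{L^1}$. The solution is the unique (mild, and here classical) solution of the system constructed from the initial datum. *)

theory Defs
  imports "HOL-Analysis.Analysis"
begin

definition pconv :: "real \<Rightarrow> (real \<Rightarrow> real) \<Rightarrow> (real \<Rightarrow> real) \<Rightarrow> real \<Rightarrow> real" where
  "pconv L K f x = integral {0..L} (\<lambda>y. K (x - y) * f y)"

text \<open>L-periodicity of a function on the real line (functions on the torus).\<close>
definition periodic :: "real \<Rightarrow> (real \<Rightarrow> real) \<Rightarrow> bool" where
  "periodic L f \<longleftrightarrow> (\<forall>x. f (x + L) = f x)"

definition C2 :: "(real \<Rightarrow> real) \<Rightarrow> bool" where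
  "C2 f \<longleftrightarrow> (\<forall>x. f differentiable at x) \<and> (\<forall>x. deriv f differentiable at x)
           \<and> continuous_on UNIV (deriv (deriv f))"

definition L1norm :: "real \<Rightarrow> nat \<Rightarrow> (nat \<Rightarrow> real \<Rightarrow> real) \<Rightarrow> real" where
  "L1norm L N v = (\<Sum>i<N. integral {0..L} (\<lambda>x. \<bar>v i x\<bar>))"

definition Tstar :: "real \<Rightarrow> nat \<Rightarrow> (nat \<Rightarrow> real \<Rightarrow> real \<Rightarrow> real) \<Rightarrow> ereal \<Rightarrow> ereal" where
  "Tstar L N u Tmax =
     (if (\<exists>C. \<forall>t. 0 \<le> t \<and> ereal t < Tmax \<longrightarrow> L1norm L N (\<lambda>i x. u i x t) \<le> C) then \<infinity>
      else Inf (ereal ` {t. 0 \<le> t \<and> ereal t < Tmax \<and>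
                  L1norm L N (\<lambda>i x. u i x t) = 2 * L1norm L N (\<lambda>i x. u i x 0)}))"

end

theory Submission
  imports Defs
begin

(* Positivity is a minimum principle with an exponential barrier.  Fix a component
   u_i and a time t < T_max.  By uniform continuity u_i stays above some m > 0 up to
   a small time a > 0.  On [a, t] the spatial derivatives of all components are
   bounded, so the derivative V' = sum_j h_ij K' * (d/dx u_j) of the nonlocal
   velocity V = d/dx sum_j h_ij K * u_j is bounded by a constant C.  At a spatial
   minimum of u_i we have u_i' = 0 and u_i'' >= 0, so the equation gives
   d/dt u_i = D_i u_i'' - u_i' V - u_i V' >= -C u_i.  Hence u_i can never touch the
   barrier m exp(-(C + 1)(s - a)), which decays faster. *)

lemma C2_derivatives:
  assumes "C2 f"
  shows "(f has_real_derivative deriv f x) (at x)"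
    and "(deriv f has_real_derivative deriv (deriv f) x) (at x)"
    and "continuous_on UNIV f"
    and "continuous_on UNIV (deriv f)"
  using assms unfolding C2_def
  by (auto simp: DERIV_deriv_iff_real_differentiable
      intro!: differentiable_imp_continuous_on differentiable_at_imp_differentiable_on)

lemma periodic_add_int_mult:
  assumes "periodic L f"
  shows "f (x + of_int k * L) = f x"
proof -
  have nat_mult: "f (y + of_nat n * L) = f y" for y n
  proof (induction n arbitrary: y)
    case (Suc n)
    have "f (y + of_nat (Suc n) * L) = f ((y + L) + of_nat n * L)"
      by (simp add: algebra_simps)
    also have "\<dots> = f y"
      using Suc assms by (simp add: periodic_def)
    finally show ?case .
  qed simp
  show ?thesis
  proof (cases "0 \<le> k")
    case True
    then show ?thesis using nat_mult[of x "nat k"] by simp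
  next
    case False
    then show ?thesis using nat_mult[of "x + of_int k * L" "nat (- k)"] by simp
  qed
qed

lemma periodic_value_in_period:
  assumes "0 < L" "periodic L f"
  obtains y where "y \<in> {0..L}" "f x = f y"
proof
  let ?k = "\<lfloor>x / L\<rfloor>"
  show "x - of_int ?k * L \<in> {0..L}"
    using assms(1) floor_divide_lower[of L x] floor_divide_upper[of L x]
    by (auto simp: distrib_right)
  show "f x = f (x - of_int ?k * L)"
    using periodic_add_int_mult[OF assms(2), of "x - of_int ?k * L" ?k] by simp
qed

lemma periodic_attains_min:
  assumes "0 < L" "periodic L f" "continuous_on {0..L} f"
  obtains x0 where "x0 \<in> {0..L}" "\<And>y. f x0 \<le> f y"
proof -
  obtain x0 where x0: "x0 \<in> {0..L}" "\<And>y. y \<in> {0..L} \<Longrightarrow> f x0 \<le> f y"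
    using continuous_attains_inf[OF compact_Icc _ assms(3)] assms(1) by fastforce
  have "f x0 \<le> f y" for y
    using periodic_value_in_period[OF assms(1,2), of y] x0(2) by metis
  with x0(1) show ?thesis using that by blast
qed

lemma has_real_derivative_pconv:
  assumes K: "\<And>x. (K has_real_derivative K' x) (at x)" and K': "continuous_on UNIV K'"
    and g: "continuous_on {0..L} g"
  shows "(pconv L K g has_real_derivative pconv L K' g z) (at z)"
proof -
  have K_cont: "continuous_on UNIV K"
    using K by (meson DERIV_isCont continuous_at_imp_continuous_on)
  have "((\<lambda>z. integral (cbox 0 L) (\<lambda>y. K (z - y) * g y)) has_field_derivative
           integral (cbox 0 L) (\<lambda>y. K' (z - y) * g y)) (at z within UNIV)"
  proof (rule leibniz_rule_field_derivative)
    show "((\<lambda>x. K (x - y) * g y) has_field_derivative K' (x - y) * g y) (at x within UNIV)"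
      for x y
      by (auto intro!: derivative_eq_intros DERIV_chain2[OF K])
    show "(\<lambda>y. K (x - y) * g y) integrable_on cbox 0 L" for x
      by (rule integrable_continuous)
        (auto intro!: continuous_intros continuous_on_compose2[OF K_cont] g)
    show "continuous_on (UNIV \<times> cbox 0 L) (\<lambda>(x, y). K' (x - y) * g y)"
      by (auto simp: split_beta intro!: continuous_intros continuous_on_compose2[OF K']
          continuous_on_compose2[OF g])
  qed auto
  then show ?thesis by (simp add: pconv_def[abs_def])
qed

text \<open>Integration by parts; the boundary terms cancel by periodicity.\<close>
lemma pconv_deriv_swap:
  assumes K: "\<And>x. (K has_real_derivative K' x) (at x)" "continuous_on UNIV K'" "periodic L K"
    and f: "\<And>x. (f has_real_derivative f' x) (at x)" "continuous_on UNIV f'" "periodic L f"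
  shows "pconv L K' f z = pconv L K f' z"
proof (cases "0 \<le> L")
  case True
  have K_cont: "continuous_on UNIV K"
    using K(1) by (meson DERIV_isCont continuous_at_imp_continuous_on)
  have f_cont: "continuous_on UNIV f"
    using f(1) by (meson DERIV_isCont continuous_at_imp_continuous_on)
  have "((\<lambda>y. - (K' (z - y) * f y) + K (z - y) * f' y) has_integral
          K (z - L) * f L - K (z - 0) * f 0) {0..L}"
  proof (rule fundamental_theorem_of_calculus[OF True])
    fix y
    have "((\<lambda>y. K (z - y) * f y) has_real_derivative
            - (K' (z - y) * f y) + K (z - y) * f' y) (at y)"
      by (auto intro!: derivative_eq_intros DERIV_chain2[OF K(1)] f(1))
    then show "((\<lambda>y. K (z - y) * f y) has_vector_derivative
            - (K' (z - y) * f y) + K (z - y) * f' y) (at y within {0..L})"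
      by (simp add: has_real_derivative_iff_has_vector_derivative has_vector_derivative_at_within)
  qed
  moreover have "K (z - L) * f L = K z * f 0"
    using K(3) f(3) unfolding periodic_def by (metis add_0 diff_add_cancel)
  ultimately have "integral {0..L} (\<lambda>y. - (K' (z - y) * f y) + K (z - y) * f' y) = 0"
    by (simp add: integral_unique)
  moreover have "(\<lambda>y. K' (z - y) * f y) integrable_on {0..L}"
    by (rule integrable_continuous_interval)
      (auto intro!: continuous_intros continuous_on_compose2[OF K(2)] continuous_on_subset[OF f_cont])
  moreover have "(\<lambda>y. K (z - y) * f' y) integrable_on {0..L}"
    by (rule integrable_continuous_interval)
      (auto intro!: continuous_intros continuous_on_compose2[OF K_cont] continuous_on_subset[OF f(2)])
  ultimately show ?thesis
    by (simp add: pconv_def integral_diff)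
qed (simp add: pconv_def)

lemma deriv_sum_pconv:
  assumes K: "\<And>x. (K has_real_derivative K' x) (at x)" "continuous_on UNIV K'" "periodic L K"
    and F: "\<And>j x. j < N \<Longrightarrow> (F j has_real_derivative F' j x) (at x)"
      "\<And>j. j < N \<Longrightarrow> continuous_on UNIV (F' j)" "\<And>j. j < N \<Longrightarrow> periodic L (F j)"
  shows "deriv (\<lambda>z. \<Sum>j<N. c j * pconv L K (F j) z) y = (\<Sum>j<N. c j * pconv L K (F' j) y)"
proof -
  have F_cont: "continuous_on {0..L} (F j)" if "j < N" for j
    using F(1)[OF that] by (meson DERIV_isCont continuous_at_imp_continuous_on)
  have "((\<lambda>z. \<Sum>j<N. c j * pconv L K (F j) z) has_real_derivative
          (\<Sum>j<N. c j * pconv L K' (F j) y)) (at y)"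
    by (intro DERIV_sum DERIV_cmult has_real_derivative_pconv[OF K(1,2)]) (simp add: F_cont)
  then show ?thesis
    using pconv_deriv_swap[OF K F(1-3)] by (simp add: DERIV_imp_deriv)
qed

lemma abs_pconv_le:
  assumes "0 \<le> L" "continuous_on UNIV k" "continuous_on {0..L} g"
    and "\<And>x. \<bar>k x\<bar> \<le> M" "\<And>s. s \<in> {0..L} \<Longrightarrow> \<bar>g s\<bar> \<le> B"
  shows "\<bar>pconv L k g z\<bar> \<le> M * B * L"
proof -
  have "norm (integral {0..L} (\<lambda>s. k (z - s) * g s)) \<le> M * B * (L - 0)"
  proof (rule integral_bound)
    show "continuous_on {0..L} (\<lambda>s. k (z - s) * g s)"
      by (auto intro!: continuous_intros continuous_on_compose2[OF assms(2)] assms(3))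
    show "norm (k (z - s) * g s) \<le> M * B" if "s \<in> {0..L}" for s
      unfolding real_norm_def abs_mult
      by (rule mult_mono) (use assms(4,5) that in \<open>auto intro: order_trans[OF abs_ge_zero]\<close>)
  qed (use assms(1) in simp)
  then show ?thesis by (simp add: pconv_def)
qed

lemma global_min_deriv2_nonneg:
  fixes f :: "real \<Rightarrow> real"
  assumes f: "\<And>x. (f has_real_derivative f' x) (at x)"
    and f': "(f' has_real_derivative f'') (at x0)"
    and min: "\<And>y. f x0 \<le> f y"
  shows "f' x0 = 0" "0 \<le> f''"
proof -
  show f'_zero: "f' x0 = 0"
    using DERIV_local_min[OF f, of 1] min by auto
  show "0 \<le> f''"
  proof (rule ccontr)
    assume "\<not> 0 \<le> f''"
    then obtain d where "0 < d" and f'_neg: "\<And>h. 0 < h \<Longrightarrow> h < d \<Longrightarrow> f' (x0 + h) < 0"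
      using DERIV_neg_dec_right[OF f'] f'_zero by force
    obtain z where z: "x0 < z" "z < x0 + d/2" "f (x0 + d/2) - f x0 = (x0 + d/2 - x0) * f' z"
      using MVT2[of x0 "x0 + d/2" f f'] \<open>0 < d\<close> f by auto
    have "f' z < 0"
      using f'_neg[of "z - x0"] z by simp
    then have "d * f' z < 0"
      using \<open>0 < d\<close> by (simp add: mult_pos_neg)
    then have "f (x0 + d/2) < f x0"
      using z(3) by simp
    with min show False by (simp add: not_less[symmetric])
  qed
qed

lemma first_zero_deriv_nonpos:
  fixes g :: "real \<Rightarrow> real"
  assumes g: "(g has_real_derivative g') (at t0)" and "a < t0"
    and pos: "\<And>t. a < t \<Longrightarrow> t < t0 \<Longrightarrow> 0 < g t" and "g t0 \<le> 0"
  shows "g t0 = 0" "g' \<le> 0"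
proof -
  have "(g \<longlongrightarrow> g t0) (at_left t0)"
    using DERIV_isCont[OF g] by (simp add: isCont_def filterlim_at_split)
  moreover have "eventually (\<lambda>t. 0 \<le> g t) (at_left t0)"
    using eventually_at_left_real[OF \<open>a < t0\<close>]
    by eventually_elim (use pos in \<open>auto simp: less_imp_le\<close>)
  ultimately have "0 \<le> g t0"
    by (rule tendsto_lowerbound) (simp add: trivial_limit_at_left_real)
  with \<open>g t0 \<le> 0\<close> show g_zero: "g t0 = 0" by simp
  show "g' \<le> 0"
  proof (rule ccontr)
    assume "\<not> g' \<le> 0"
    then obtain d where "0 < d" and dec: "\<And>h. 0 < h \<Longrightarrow> h < d \<Longrightarrow> g (t0 - h) < g t0"
      using DERIV_pos_inc_left[OF g] by force
    define h where "h = min (d/2) ((t0 - a)/2)"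
    have "0 < h"
      using \<open>0 < d\<close> \<open>a < t0\<close> by (simp add: h_def)
    moreover have "h \<le> d/2" "h \<le> (t0 - a)/2"
      unfolding h_def by (rule min.cobounded1, rule min.cobounded2)
    ultimately have "g (t0 - h) < 0" and "0 < g (t0 - h)"
      using dec[of h] g_zero pos[of "t0 - h"] \<open>0 < d\<close> by auto
    then show False by simp
  qed
qed

lemma closed_sublevel_projection:
  fixes A :: "'a::t2_space set" and B :: "'b::t2_space set"
  assumes "compact A" "compact B" "continuous_on (A \<times> B) \<phi>"
  shows "closed {t \<in> B. \<exists>x\<in>A. \<phi> (x, t) \<le> (0::real)}"
proof -
  have "closed (A \<times> B)"
    using assms(1,2) by (intro closed_Times compact_imp_closed)
  then have "closed ((A \<times> B) \<inter> \<phi> -` {..0})"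
    using assms(3) by (intro continuous_closed_preimage) auto
  then have "compact ((A \<times> B) \<inter> \<phi> -` {..0})"
    using assms(1,2) by (metis compact_Int_closed compact_Times inf.absorb_iff2 inf_le1)
  then have "compact (snd ` ((A \<times> B) \<inter> \<phi> -` {..0}))"
    by (intro compact_continuous_image continuous_intros)
  moreover have "snd ` ((A \<times> B) \<inter> \<phi> -` {..0}) = {t \<in> B. \<exists>x\<in>A. \<phi> (x, t) \<le> 0}"
    by force
  ultimately show ?thesis by (simp add: compact_imp_closed)
qed

lemma compact_bound_finite_family:
  fixes f :: "nat \<Rightarrow> 'a::topological_space \<Rightarrow> real"
  assumes "compact S" "\<And>j. j < N \<Longrightarrow> continuous_on S (f j)"
  obtains B where "\<And>j p. j < N \<Longrightarrow> p \<in> S \<Longrightarrow> \<bar>f j p\<bar> \<le> B"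
proof -
  have "continuous_on S (\<lambda>p. \<Sum>j<N. \<bar>f j p\<bar>)"
    using assms(2) by (intro continuous_intros) auto
  then obtain B where B: "\<And>p. p \<in> S \<Longrightarrow> norm (\<Sum>j<N. \<bar>f j p\<bar>) \<le> B"
    using continuous_on_compact_bound[OF assms(1)] by blast
  have "\<bar>f j p\<bar> \<le> B" if "j < N" "p \<in> S" for j p
  proof -
    have "\<bar>f j p\<bar> \<le> (\<Sum>j<N. \<bar>f j p\<bar>)"
      by (rule member_le_sum) (use that in auto)
    also have "\<dots> \<le> B" using B[OF that(2)] by simp
    finally show ?thesis .
  qed
  then show ?thesis using that by blast
qed

lemma continuous_positive_persists:
  fixes v :: "real \<Rightarrow> real \<Rightarrow> real"
  assumes "compact A" "0 < b" and cont: "continuous_on (A \<times> {0..b}) (\<lambda>(x, t). v x t)"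
    and pos: "\<And>x. x \<in> A \<Longrightarrow> 0 < v x 0"
  obtains a m where "0 < a" "a \<le> b" "0 < m" "\<And>x. x \<in> A \<Longrightarrow> m < v x a"
proof (cases "A = {}")
  case True
  then show ?thesis using that[of b 1] \<open>0 < b\<close> by simp
next
  case False
  have "continuous_on A (\<lambda>x. v x 0)"
    by (rule continuous_on_compose2[OF cont, of _ "\<lambda>x. (x, 0)", simplified])
      (auto intro!: continuous_intros simp: \<open>0 < b\<close> less_imp_le)
  then obtain x0 where "x0 \<in> A" and x0: "\<And>x. x \<in> A \<Longrightarrow> v x0 0 \<le> v x 0"
    using continuous_attains_inf[OF \<open>compact A\<close> False] by blast
  define m where "m = v x0 0 / 2"
  have "0 < m" using pos[OF \<open>x0 \<in> A\<close>] by (simp add: m_def)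
  obtain d where "0 < d" and d: "\<And>p p'. p \<in> A \<times> {0..b} \<Longrightarrow> p' \<in> A \<times> {0..b} \<Longrightarrow>
      dist p' p < d \<Longrightarrow> dist ((\<lambda>(x, t). v x t) p') ((\<lambda>(x, t). v x t) p) < m"
    using compact_uniformly_continuous[OF cont compact_Times[OF \<open>compact A\<close> compact_Icc]] \<open>0 < m\<close>
    unfolding uniformly_continuous_on_def by blast
  define a where "a = min (d/2) b"
  have "0 < a" "a \<le> b" using \<open>0 < d\<close> \<open>0 < b\<close> by (auto simp: a_def)
  moreover have "m < v x a" if "x \<in> A" for x
  proof -
    have "dist (v x a) (v x 0) < m"
      using d[of "(x, 0)" "(x, a)"] that \<open>0 < a\<close> \<open>a \<le> b\<close> \<open>0 < d\<close>
      by (simp add: dist_Pair_Pair a_def)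
    moreover have "2 * m \<le> v x 0" using x0[OF that] by (simp add: m_def)
    ultimately show ?thesis by (simp add: dist_real_def)
  qed
  ultimately show ?thesis using that \<open>0 < m\<close> by blast
qed

lemma drift_diffusion_at_min:
  fixes f :: "real \<Rightarrow> real" and F :: "nat \<Rightarrow> real \<Rightarrow> real" and c :: "nat \<Rightarrow> real"
  assumes "0 \<le> L" "0 \<le> D"
    and K: "\<And>x. K differentiable at x" "\<And>x. deriv K differentiable at x" "periodic L K"
      "\<And>x. \<bar>deriv K x\<bar> \<le> M"
    and F: "\<And>j. j < N \<Longrightarrow> C2 (F j)" "\<And>j. j < N \<Longrightarrow> periodic L (F j)"
      "\<And>j s. j < N \<Longrightarrow> s \<in> {0..L} \<Longrightarrow> \<bar>deriv (F j) s\<bar> \<le> B"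
    and f: "C2 f" "\<And>y. f x0 \<le> f y" "0 \<le> f x0"
  shows "- (\<Sum>j<N. \<bar>c j\<bar> * (M * B * L)) * f x0
    \<le> D * deriv (deriv f) x0 - deriv (\<lambda>y. f y * deriv (\<lambda>z. \<Sum>j<N. c j * pconv L K (F j) z) y) x0"
proof -
  have K': "(K has_real_derivative deriv K x) (at x)" for x
    using K(1) by (simp add: DERIV_deriv_iff_real_differentiable)
  have K'_cont: "continuous_on UNIV (deriv K)"
    using K(2) by (intro differentiable_imp_continuous_on differentiable_at_imp_differentiable_on)
  define V where "V y = (\<Sum>j<N. c j * pconv L K (deriv (F j)) y)" for y
  define V' where "V' y = (\<Sum>j<N. c j * pconv L (deriv K) (deriv (F j)) y)" for y
  have V_eq: "deriv (\<lambda>z. \<Sum>j<N. c j * pconv L K (F j) z) = V"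
    unfolding V_def by (rule ext, rule deriv_sum_pconv[OF K' K'_cont K(3)])
      (use C2_derivatives F in auto)
  have "(V has_real_derivative V' x0) (at x0)"
    unfolding V_def V'_def
    by (intro DERIV_sum DERIV_cmult has_real_derivative_pconv[OF K' K'_cont])
      (use C2_derivatives(4) F(1) in \<open>auto intro: continuous_on_subset\<close>)
  moreover note f_min = global_min_deriv2_nonneg[OF C2_derivatives(1,2)[OF f(1)] f(2)]
  ultimately have "deriv (\<lambda>y. f y * V y) x0 = f x0 * V' x0"
    using DERIV_imp_deriv[OF DERIV_mult[OF C2_derivatives(1)[OF f(1)]]] by simp
  moreover have "V' x0 \<le> (\<Sum>j<N. \<bar>c j\<bar> * (M * B * L))" (is "_ \<le> ?C")
  proof -
    have "V' x0 \<le> (\<Sum>j<N. \<bar>c j * pconv L (deriv K) (deriv (F j)) x0\<bar>)"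
      unfolding V'_def by (rule order_trans[OF abs_ge_self sum_abs])
    also have "\<dots> \<le> (\<Sum>j<N. \<bar>c j\<bar> * (M * B * L))"
      unfolding abs_mult
      by (intro sum_mono mult_left_mono abs_pconv_le K(4) F(3))
        (use \<open>0 \<le> L\<close> K'_cont C2_derivatives(4) F(1) in \<open>auto intro: continuous_on_subset\<close>)
    finally show ?thesis .
  qed
  then have "f x0 * V' x0 \<le> ?C * f x0"
    using mult_left_mono f(3) by (metis mult.commute)
  moreover have "0 \<le> D * deriv (deriv f) x0"
    using f_min(2) \<open>0 \<le> D\<close> by simp
  ultimately show ?thesis
    unfolding V_eq by linarith
qed

lemma periodic_min_principle:
  fixes v vt :: "real \<Rightarrow> real \<Rightarrow> real"
  assumes "0 < L" "0 < m"
    and cont: "continuous_on ({0..L} \<times> {a..b}) (\<lambda>(x, t). v x t)"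
    and per: "\<And>t. t \<in> {a..b} \<Longrightarrow> periodic L (\<lambda>x. v x t)"
    and init: "\<And>x. x \<in> {0..L} \<Longrightarrow> m < v x a"
    and vt: "\<And>x t. t \<in> {a<..b} \<Longrightarrow> ((\<lambda>s. v x s) has_real_derivative vt x t) (at t)"
    and at_min: "\<And>x t. t \<in> {a<..b} \<Longrightarrow> 0 < v x t \<Longrightarrow> (\<And>y. v x t \<le> v y t) \<Longrightarrow>
      - C * v x t \<le> vt x t"
    and "t \<in> {a..b}"
  shows "0 < v x t"
proof -
  define q where "q t = m * exp (- (C + 1) * (t - a))" for t
  have q_pos: "0 < q t" for t
    using \<open>0 < m\<close> by (simp add: q_def)
  have q_deriv: "(q has_real_derivative - (C + 1) * q t) (at t)" for t
    unfolding q_def by (auto intro!: derivative_eq_intros)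
  define Z where "Z = {t \<in> {a..b}. \<exists>x\<in>{0..L}. v x t - q t \<le> 0}"
  have "Z = {}"
  proof (rule ccontr)
    assume "Z \<noteq> {}"
    have "continuous_on ({0..L} \<times> {a..b}) (\<lambda>p. (\<lambda>(x, t). v x t) p - q (snd p))"
      using cont unfolding q_def by (intro continuous_intros) auto
    from closed_sublevel_projection[OF compact_Icc compact_Icc this]
    have "closed Z" unfolding Z_def by simp
    define t0 where "t0 = Inf Z"
    have "t0 \<in> Z"
      unfolding t0_def using closed_contains_Inf[OF \<open>Z \<noteq> {}\<close> _ \<open>closed Z\<close>]
      by (auto simp: Z_def bdd_below_def)
    then obtain x1 where "t0 \<in> {a..b}" "x1 \<in> {0..L}" "v x1 t0 \<le> q t0"
      by (auto simp: Z_def)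
    moreover have "t0 \<noteq> a"
      using init \<open>x1 \<in> {0..L}\<close> \<open>v x1 t0 \<le> q t0\<close> by (force simp: q_def)
    ultimately have t0: "t0 \<in> {a<..b}" by simp
    have "continuous_on {0..L} (\<lambda>x. v x t0)"
      by (rule continuous_on_compose2[OF cont, of _ "\<lambda>x. (x, t0)", simplified])
        (use t0 in \<open>auto intro!: continuous_intros\<close>)
    then obtain x0 where "x0 \<in> {0..L}" and x0_min: "\<And>y. v x0 t0 \<le> v y t0"
      using periodic_attains_min[OF \<open>0 < L\<close> per] t0 by (metis greaterThanAtMost_iff
        atLeastAtMost_iff less_imp_le)
    define g where "g s = v x0 s - q s" for s
    have "(g has_real_derivative vt x0 t0 + (C + 1) * q t0) (at t0)"
      unfolding g_def using DERIV_diff[OF vt[OF t0, of x0] q_deriv] by (simp add: algebra_simps)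
    moreover have "0 < g s" if "a < s" "s < t0" for s
    proof (rule ccontr)
      assume "\<not> 0 < g s"
      then have "s \<in> Z"
        using that t0 \<open>x0 \<in> {0..L}\<close> unfolding Z_def g_def by force
      then have "t0 \<le> s"
        unfolding t0_def by (rule cInf_lower) (auto simp: Z_def bdd_below_def)
      with \<open>s < t0\<close> show False by simp
    qed
    moreover have "g t0 \<le> 0"
      using x0_min[of x1] \<open>v x1 t0 \<le> q t0\<close> by (simp add: g_def)
    ultimately have "g t0 = 0" and "vt x0 t0 + (C + 1) * q t0 \<le> 0"
      using first_zero_deriv_nonpos t0 by auto
    moreover have "- C * v x0 t0 \<le> vt x0 t0"
      using at_min[OF t0 _ x0_min] \<open>g t0 = 0\<close> q_pos[of t0] by (simp add: g_def)
    ultimately show False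
      using q_pos[of t0] by (simp add: g_def algebra_simps)
  qed
  obtain y where "y \<in> {0..L}" "v x t = v y t"
    using periodic_value_in_period[OF \<open>0 < L\<close> per[OF \<open>t \<in> {a..b}\<close>]] .
  with \<open>Z = {}\<close> \<open>t \<in> {a..b}\<close> show ?thesis
    using q_pos[of t] unfolding Z_def by force
qed

lemma drift_diffusion_solution_positive:
  fixes u :: "nat \<Rightarrow> real \<Rightarrow> real \<Rightarrow> real"
  assumes "0 < L" "i < N" "0 \<le> D" "0 < m"
    and K: "\<And>x. K differentiable at x" "\<And>x. deriv K differentiable at x" "periodic L K"
      "\<And>x. \<bar>deriv K x\<bar> \<le> M"
    and cont: "continuous_on ({0..L} \<times> {a..b}) (\<lambda>(x, t). u i x t)"
    and per: "\<And>j t. j < N \<Longrightarrow> t \<in> {a..b} \<Longrightarrow> periodic L (\<lambda>x. u j x t)"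
    and C2: "\<And>j t. j < N \<Longrightarrow> t \<in> {a<..b} \<Longrightarrow> C2 (\<lambda>x. u j x t)"
    and ux_cont: "\<And>j. j < N \<Longrightarrow>
      continuous_on ({0..L} \<times> {a..b}) (\<lambda>(x, t). deriv (\<lambda>y. u j y t) x)"
    and init: "\<And>x. x \<in> {0..L} \<Longrightarrow> m < u i x a"
    and pde: "\<And>x t. t \<in> {a<..b} \<Longrightarrow> ((\<lambda>s. u i x s) has_real_derivative
        D * deriv (deriv (\<lambda>y. u i y t)) x
        - deriv (\<lambda>y. u i y t * deriv (\<lambda>z. \<Sum>j<N. c j * pconv L K (\<lambda>w. u j w t) z) y) x) (at t)"
    and "t \<in> {a..b}"
  shows "0 < u i x t"
proof -
  obtain B where B_pair: "\<And>j p. j < N \<Longrightarrow> p \<in> {0..L} \<times> {a..b} \<Longrightarrow>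
      \<bar>(\<lambda>(y, s). deriv (\<lambda>w. u j w s) y) p\<bar> \<le> B"
    using ux_cont by (rule compact_bound_finite_family[OF compact_Times[OF compact_Icc compact_Icc],
        where f = "\<lambda>j (y, s). deriv (\<lambda>w. u j w s) y"]) auto
  have B: "\<bar>deriv (\<lambda>w. u j w s) y\<bar> \<le> B" if "j < N" "y \<in> {0..L}" "s \<in> {a..b}" for j y s
    using B_pair[of j "(y, s)"] that by simp
  define vt where "vt y s = D * deriv (deriv (\<lambda>w. u i w s)) y
    - deriv (\<lambda>w. u i w s * deriv (\<lambda>z. \<Sum>j<N. c j * pconv L K (\<lambda>w. u j w s) z) w) y" for y s
  define C where "C = (\<Sum>j<N. \<bar>c j\<bar> * (M * B * L))"
  show ?thesis
  proof (rule periodic_min_principle[where v = "u i" and vt = vt and m = m and a = a and b = b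
        and C = C])
    show "((\<lambda>s. u i y s) has_real_derivative vt y s) (at s)" if "s \<in> {a<..b}" for y s
      unfolding vt_def using pde[OF that] .
    show "- C * u i y s \<le> vt y s"
      if "s \<in> {a<..b}" "0 < u i y s" "\<And>w. u i y s \<le> u i w s" for y s
      unfolding vt_def C_def
      by (rule drift_diffusion_at_min[where f = "\<lambda>w. u i w s" and F = "\<lambda>j w. u j w s"])
        (use that assms(1-3) K C2 per B in auto)
  qed (use assms(1,2,4) cont per init \<open>t \<in> {a..b}\<close> in auto)
qed

theorem lemma3p9:
  fixes L :: real and N :: nat and D :: "nat \<Rightarrow> real" and h :: "nat \<Rightarrow> nat \<Rightarrow> real"
    and K :: "real \<Rightarrow> real" and u0 :: "nat \<Rightarrow> real \<Rightarrow> real"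
    and u :: "nat \<Rightarrow> real \<Rightarrow> real \<Rightarrow> real" and Tmax :: ereal
  assumes L_pos: "L > 0" and N_pos: "N \<ge> 1"
    and D_pos: "\<And>i. i < N \<Longrightarrow> D i > 0"
    \<comment> \<open>kernel: periodic, nonnegative probability density with zero mean,
        twice differentiable, with bounded derivative\<close>
    and K_per: "periodic L K"
    and K_nonneg: "\<And>x. K x \<ge> 0"
    and K_int: "K integrable_on {0..L}" and K_mass: "integral {0..L} K = 1"
    and K_mean: "(\<lambda>x. x * K x) integrable_on {-L/2..L/2}"
                "integral {-L/2..L/2} (\<lambda>x. x * K x) = 0"
    and K_diff: "\<And>x. K differentiable at x" "\<And>x. deriv K differentiable at x"
    and K'_bdd: "\<exists>M. \<forall>x. \<bar>deriv K x\<bar> \<le> M"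
    \<comment> \<open>initial datum: C^2, periodic, strictly positive\<close>
    and u0_C2: "\<And>i. i < N \<Longrightarrow> C2 (u0 i)"
    and u0_per: "\<And>i. i < N \<Longrightarrow> periodic L (u0 i)"
    and u0_pos: "\<And>i x. i < N \<Longrightarrow> u0 i x > 0"
    \<comment> \<open>u is the (classical) solution on [0,Tmax)\<close>
    and Tmax_pos: "Tmax > 0"
    and u_per: "\<And>i t. i < N \<Longrightarrow> 0 \<le> t \<Longrightarrow> ereal t < Tmax \<Longrightarrow> periodic L (\<lambda>x. u i x t)"
    and u_init: "\<And>i x. i < N \<Longrightarrow> u i x 0 = u0 i x"
    and u_cont: "\<And>i. i < N \<Longrightarrow>
        continuous_on (UNIV \<times> {t. 0 \<le> t \<and> ereal t < Tmax}) (\<lambda>(x, t). u i x t)"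
    and u_C2x: "\<And>i t. i < N \<Longrightarrow> 0 < t \<Longrightarrow> ereal t < Tmax \<Longrightarrow> C2 (\<lambda>x. u i x t)"
    and u_x_cont: "\<And>i. i < N \<Longrightarrow>
        continuous_on (UNIV \<times> {t. 0 < t \<and> ereal t < Tmax}) (\<lambda>(x, t). deriv (\<lambda>y. u i y t) x)"
    and u_xx_cont: "\<And>i. i < N \<Longrightarrow>
        continuous_on (UNIV \<times> {t. 0 < t \<and> ereal t < Tmax})
          (\<lambda>(x, t). deriv (deriv (\<lambda>y. u i y t)) x)"
    and u_pde: "\<And>i x t. i < N \<Longrightarrow> 0 < t \<Longrightarrow> ereal t < Tmax \<Longrightarrow>
        ((\<lambda>s. u i x s) has_real_derivative
           (D i * deriv (deriv (\<lambda>y. u i y t)) x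
            - deriv (\<lambda>y. u i y t *
                deriv (\<lambda>z. \<Sum>j<N. h i j * pconv L K (\<lambda>w. u j w t) z) y) x)) (at t)"
  shows "\<forall>i<N. \<forall>x t. 0 \<le> t \<and> ereal t < Tstar L N u Tmax \<and> ereal t < Tmax \<longrightarrow> u i x t > 0"
proof (intro allI impI)
  fix i x t
  assume i: "i < N" and t: "0 \<le> t \<and> ereal t < Tstar L N u Tmax \<and> ereal t < Tmax"
  have before_Tmax: "ereal s < Tmax" if "s \<le> t" for s
    using t that by (meson ereal_less_eq(3) le_less_trans)
  show "0 < u i x t"
  proof (cases "t = 0")
    case True
    then show ?thesis using u_init u0_pos i by simp
  next
    case False
    have u_cont_on: "continuous_on ({0..L} \<times> {a..t}) (\<lambda>(x, s). u j x s)"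
      if "j < N" "0 \<le> a" for j a
      by (rule continuous_on_subset[OF u_cont[OF that(1)]]) (use that before_Tmax in auto)
    have "0 < t" "\<And>x. 0 < u i x 0"
      using False t u_init u0_pos i by auto
    then obtain a m where a: "0 < a" "a \<le> t" and "0 < m"
      and init: "\<And>x. x \<in> {0..L} \<Longrightarrow> m < u i x a"
      using continuous_positive_persists[OF compact_Icc _ u_cont_on[OF i order.refl]] by blast
    obtain M where M: "\<And>x. \<bar>deriv K x\<bar> \<le> M"
      using K'_bdd by blast
    show ?thesis
    proof (rule drift_diffusion_solution_positive
        [where u = u and c = "h i" and m = m and a = a and b = t])
      show "continuous_on ({0..L} \<times> {a..t}) (\<lambda>(y, s). deriv (\<lambda>w. u j w s) y)" if "j < N" for j
        by (rule continuous_on_subset[OF u_x_cont[OF that]]) (use a before_Tmax in auto)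
    qed (use L_pos i less_imp_le[OF D_pos[OF i]] \<open>0 < m\<close> K_diff K_per M u_cont_on a u_per
        u_C2x init u_pde before_Tmax in auto)
  qed
qed

end
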